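(* Assume $g$ is bounded and $J_s=\emptyset$. Then for $c\in[0,R(1/\lambda_{\max}))$, any $G\in C(\mathbb T)$ and $\delta>0$, $$\lim_{N\to\infty}\mathcal R^N_c\Big[\Big|\langle G,\pi^N\rangle-\int_{\mathbb T}G(x)c\,dx\Big|>\delta\Big]=0 .$$
   Context: $\mathbb N_0=\{0,1,\dots\}$, $\mathbb T=[0,1)$ unit torus. $g:\mathbb N_0\to[0,\infty)$ with $g(n)=0$ iff $n=0$, $|g(n+1)-g(n)|\le g^*$, nondecreasing, $g(n)\to1$ (bounded case). $g(n)!=\prod_{i\le n}g(i)$, $g(0)!=1$, $Z(\phi)=\sum_n\phi^n/g(n)!$ and $\mathcal P_\phi(n)=\phi^n/(g(n)!Z(\phi))$ for $\phi\in[0,1)$, $R(\phi)$ the mean of $\mathcal P_\phi$, $\Phi=R^{-1}$. Finite index set $J$ with pairwise distinct $x_j\in\mathbb T$, $\beta_j\in\mathbb R$, $\lambda_j>0$; $J_s=\{j:\beta_j>0\}$ (assumed empty, i.e. $\beta_j\le0$), $J_c=\{j:\beta_j=0,\lambda_j>1\}$; $\lambda_{\max}=\max_{j\in J_c}\lambda_j$ if $J_c\ne\emptyset$, else $\lambda_{\max}=1$. $\mathbb T_N=\mathbb Z/N\mathbb Z$, $k_{j,N}=\lfloor x_jN\rfloor$, $\mathfrak D_N=\{k_{j,N}\}$. $\mathcal R^N_c$ is the product measure on $\mathbb N_0^{\mathbb T_N}$ with marginals $\mathcal P_{\Phi(c)}$ at $k\notin\mathfrak D_N$ and $\mathcal P_{\lambda_jN^{\beta_j}\Phi(c)}$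 at $k_{j,N}$. $\pi^N=N^{-1}\sum_{k\in\mathbb T_N}\xi(k)\delta_{k/N}$. *)

theory Defs
  imports "HOL-Probability.Probability"
begin

definition gfact :: "(nat \<Rightarrow> real) \<Rightarrow> nat \<Rightarrow> real" where
  "gfact g n = (\<Prod>i\<in>{1..n}. g i)"

definition Zpart :: "(nat \<Rightarrow> real) \<Rightarrow> real \<Rightarrow> real" where
  "Zpart g \<phi> = (\<Sum>n. \<phi> ^ n / gfact g n)"

definition Pdist :: "(nat \<Rightarrow> real) \<Rightarrow> real \<Rightarrow> nat \<Rightarrow> real" where
  "Pdist g \<phi> n = \<phi> ^ n / (gfact g n * Zpart g \<phi>)"

definition Rmean :: "(nat \<Rightarrow> real) \<Rightarrow> real \<Rightarrow> real" where
  "Rmean g \<phi> = (\<Sum>n. real n * Pdist g \<phi> n)"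

definition Phi :: "(nat \<Rightarrow> real) \<Rightarrow> real \<Rightarrow> real" where
  "Phi g c = (THE \<phi>. 0 \<le> \<phi> \<and> \<phi> < 1 \<and> Rmean g \<phi> = c)"

definition Jcrit :: "'j set \<Rightarrow> ('j \<Rightarrow> real) \<Rightarrow> ('j \<Rightarrow> real) \<Rightarrow> 'j set" where
  "Jcrit J \<beta> lam = {j \<in> J. \<beta> j = 0 \<and> lam j > 1}"

definition lambda_max :: "'j set \<Rightarrow> ('j \<Rightarrow> real) \<Rightarrow> ('j \<Rightarrow> real) \<Rightarrow> real" where
  "lambda_max J \<beta> lam = (if Jcrit J \<beta> lam = {} then 1 else Max (lam ` Jcrit J \<beta> lam))"

definition ksite :: "real \<Rightarrow> nat \<Rightarrow> nat" where
  "ksite xj N = nat \<lfloor>xj * real N\<rfloor>"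

text \<open>Fugacity at site k of T_N: lambda_j N^beta_j Phi(c) at k = k_{j,N}, else Phi(c).
  (For the finitely many small N where two defect sites may coincide, an arbitrary
  one of the defects is chosen; this does not affect the limit.)\<close>
definition site_fug :: "(nat \<Rightarrow> real) \<Rightarrow> 'j set \<Rightarrow> ('j \<Rightarrow> real) \<Rightarrow> ('j \<Rightarrow> real) \<Rightarrow> ('j \<Rightarrow> real)
    \<Rightarrow> real \<Rightarrow> nat \<Rightarrow> nat \<Rightarrow> real" where
  "site_fug g J x \<beta> lam c N k =
     (if \<exists>j\<in>J. k = ksite (x j) N
      then (let j = (SOME j. j \<in> J \<and> k = ksite (x j) N) in lam j * real N powr \<beta> j * Phi g c)
      else Phi g c)"

definition RN :: "(nat \<Rightarrow> real) \<Rightarrow> 'j set \<Rightarrow> ('j \<Rightarrow> real) \<Rightarrow> ('j \<Rightarrow> real) \<Rightarrow> ('j \<Rightarrow> real)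
    \<Rightarrow> real \<Rightarrow> nat \<Rightarrow> (nat \<Rightarrow> nat) measure" where
  "RN g J x \<beta> lam c N =
     PiM {..<N} (\<lambda>k. point_measure (UNIV :: nat set)
        (\<lambda>n. ennreal (Pdist g (site_fug g J x \<beta> lam c N k) n)))"

definition pairing_emp :: "(real \<Rightarrow> real) \<Rightarrow> nat \<Rightarrow> (nat \<Rightarrow> nat) \<Rightarrow> real" where
  "pairing_emp G N \<xi> = (1 / real N) * (\<Sum>k<N. real (\<xi> k) * G (real k / real N))"

end

theory Submission
  imports Defs
begin

text \<open>Under \<open>R\<^sup>N\<^sub>c\<close> the occupation numbers \<open>\<xi>(k)\<close> are independent with laws \<open>P\<^sub>\<phi>\<close>, where
  \<open>\<phi> = \<Phi>(c)\<close> except at the at most \<open>|J|\<close> defect sites. Since no defect is supercritical and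
  \<open>c < R(1/\<lambda>\<^sub>m\<^sub>a\<^sub>x)\<close>, all these fugacities are eventually bounded by one \<open>\<phi>' < 1\<close>, so the
  means and variances of the \<open>\<xi>(k)\<close> are uniformly bounded. Hence the mean of \<open>\<langle>G, \<pi>\<^sup>N\<rangle>\<close> is a
  Riemann sum of \<open>G c\<close> perturbed by \<open>O(1/N)\<close> at \<open>O(1)\<close> sites, which tends to \<open>\<integral> G c\<close>, while its
  variance is \<open>O(1/N)\<close>; Chebyshev's inequality concludes. That \<open>\<Phi> = R\<^sup>-\<^sup>1\<close> is well defined
  rests on \<open>R\<close> being continuous, strictly increasing (a likelihood-ratio argument) and unbounded
  on \<open>[0,1)\<close>, the latter because \<open>g \<le> 1\<close> gives \<open>Z(\<phi>) \<ge> 1/(1 - \<phi>)\<close>.\<close>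

lemma sum_power2_le_uniform:
  fixes a :: "nat \<Rightarrow> real"
  assumes "\<And>k. k < N \<Longrightarrow> \<bar>a k\<bar> \<le> B / real N"
  shows "(\<Sum>k<N. (a k)\<^sup>2) \<le> B\<^sup>2 / real N"
proof -
  have "(\<Sum>k<N. (a k)\<^sup>2) \<le> (\<Sum>k<N. (B / real N)\<^sup>2)"
  proof (rule sum_mono)
    fix k assume "k \<in> {..<N}"
    then have "\<bar>a k\<bar> ^ 2 \<le> (B / real N) ^ 2" using assms by (intro power_mono) auto
    then show "(a k)\<^sup>2 \<le> (B / real N)\<^sup>2" by simp
  qed
  also have "\<dots> = B\<^sup>2 / real N" by (cases "N = 0") (simp_all add: power2_eq_square)
  finally show ?thesis .
qed

lemma threshold_product_nonneg:
  fixes Q s m :: real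
  assumes "1 < Q" "0 < s" "Q powr m = 1 / s"
  shows "0 \<le> (real n - m) * (s * Q ^ n - 1)"
proof (cases "m \<le> real n")
  case True
  then have "1 / s \<le> Q ^ n"
    using assms by (metis powr_mono powr_realpow less_imp_le zero_less_one less_trans)
  then have "1 \<le> s * Q ^ n" using assms by (simp add: field_simps)
  then show ?thesis using True by (intro mult_nonneg_nonneg) auto
next
  case False
  then have "Q ^ n < 1 / s"
    using assms by (metis powr_less_mono powr_realpow not_le zero_less_one less_trans)
  then have "s * Q ^ n < 1" using assms by (simp add: field_simps)
  then show ?thesis using False by (intro mult_nonpos_nonpos) auto
qed

section \<open>Point measures and products of independent components\<close>

lemma
  fixes p f :: "nat \<Rightarrow> real"
  assumes p: "\<And>n. 0 \<le> p n" and summable: "summable (\<lambda>n. p n * \<bar>f n\<bar>)"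
  shows integrable_point_measure_nat: "integrable (point_measure UNIV (\<lambda>n. ennreal (p n))) f"
    and integral_point_measure_nat: "integral\<^sup>L (point_measure UNIV (\<lambda>n. ennreal (p n))) f = (\<Sum>n. p n * f n)"
proof -
  have "integrable (count_space UNIV) (\<lambda>n. p n *\<^sub>R f n)"
    unfolding integrable_count_space_nat_iff using summable p by (simp add: abs_mult)
  then show "integrable (point_measure UNIV (\<lambda>n. ennreal (p n))) f"
    and "integral\<^sup>L (point_measure UNIV (\<lambda>n. ennreal (p n))) f = (\<Sum>n. p n * f n)"
    unfolding point_measure_def using p
    by (auto simp: integrable_density integral_density integral_count_space_nat)
qed

lemma prob_space_point_measure_nat:
  fixes p :: "nat \<Rightarrow> real"
  assumes p: "\<And>n. 0 \<le> p n" and "p sums 1"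
  shows "prob_space (point_measure UNIV (\<lambda>n. ennreal (p n)))" (is "prob_space ?M")
proof
  have "summable (\<lambda>n. p n * \<bar>1\<bar>)" using assms by (simp add: sums_summable)
  then have "integral\<^sup>L ?M (\<lambda>_. 1 :: real) = 1" and "integrable ?M (\<lambda>_. 1 :: real)"
    using assms integral_point_measure_nat[of p "\<lambda>_. 1"] integrable_point_measure_nat[of p "\<lambda>_. 1"]
    by (auto simp: sums_iff)
  then have "measure ?M (space ?M) = 1" and "emeasure ?M (space ?M) < \<infinity>"
    by (simp_all add: integrable_iff_bounded)
  then show "emeasure ?M (space ?M) = 1"
    by (simp add: emeasure_eq_ennreal_measure less_top)
qed

context finite_product_prob_space
begin

lemma
  fixes f :: "'b \<Rightarrow> 'c::{banach, second_countable_topology}"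
  assumes "i \<in> I" "integrable (M i) f"
  shows integrable_PiM_component: "integrable (PiM I M) (\<lambda>\<omega>. f (\<omega> i))"
    and integral_PiM_component: "(\<integral>\<omega>. f (\<omega> i) \<partial>PiM I M) = integral\<^sup>L (M i) f"
proof -
  have [measurable]: "(\<lambda>\<omega>. \<omega> i) \<in> measurable (PiM I M) (M i)" "f \<in> borel_measurable (M i)"
    using assms by (auto intro: measurable_component_singleton)
  show "integrable (PiM I M) (\<lambda>\<omega>. f (\<omega> i))"
    using assms PiM_component[OF assms(1)] integrable_distr_eq[of "\<lambda>\<omega>. \<omega> i" "PiM I M" "M i" f]
    by simp
  show "(\<integral>\<omega>. f (\<omega> i) \<partial>PiM I M) = integral\<^sup>L (M i) f"
    using PiM_component[OF assms(1)] integral_distr[of "\<lambda>\<omega>. \<omega> i" "PiM I M" "M i" f]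
    by simp
qed

lemma
  fixes f h :: "'b \<Rightarrow> real"
  assumes "i \<in> I" "k \<in> I" "i \<noteq> k" "integrable (M i) f" "integrable (M k) h"
  shows integrable_PiM_components_mult: "integrable (PiM I M) (\<lambda>\<omega>. f (\<omega> i) * h (\<omega> k))"
    and integral_PiM_components_mult:
      "(\<integral>\<omega>. f (\<omega> i) * h (\<omega> k) \<partial>PiM I M) = integral\<^sup>L (M i) f * integral\<^sup>L (M k) h"
proof -
  define F where "F j = (if j = i then f else if j = k then h else (\<lambda>_. 1))" for j
  have F_int: "integrable (M j) (F j)" for j
    using assms by (simp add: F_def)
  have F_prod: "(\<Prod>j\<in>I. F j (\<omega> j)) = f (\<omega> i) * h (\<omega> k)" for \<omega>
  proof -
    have "(\<Prod>j\<in>I. F j (\<omega> j)) = (\<Prod>j\<in>{i, k}. F j (\<omega> j))"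
      using assms finite_index by (intro prod.mono_neutral_right) (auto simp: F_def)
    then show ?thesis using assms by (simp add: F_def)
  qed
  have "(\<Prod>j\<in>I. integral\<^sup>L (M j) (F j)) = (\<Prod>j\<in>{i, k}. integral\<^sup>L (M j) (F j))"
    using assms finite_index by (intro prod.mono_neutral_right) (auto simp: F_def M.prob_space)
  then have "(\<Prod>j\<in>I. integral\<^sup>L (M j) (F j)) = integral\<^sup>L (M i) f * integral\<^sup>L (M k) h"
    using assms by (simp add: F_def)
  then show "integrable (PiM I M) (\<lambda>\<omega>. f (\<omega> i) * h (\<omega> k))"
    and "(\<integral>\<omega>. f (\<omega> i) * h (\<omega> k) \<partial>PiM I M) = integral\<^sup>L (M i) f * integral\<^sup>L (M k) h"
    using product_integrable_prod[OF finite_index F_int] product_integral_prod[OF finite_index F_int]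
    unfolding F_prod by simp_all
qed

text \<open>Independent centred components are orthogonal in \<open>L\<^sup>2\<close>.\<close>
lemma
  fixes f :: "'a \<Rightarrow> 'b \<Rightarrow> real"
  assumes meas: "\<And>i. i \<in> I \<Longrightarrow> f i \<in> borel_measurable (M i)"
    and square_int: "\<And>i. i \<in> I \<Longrightarrow> integrable (M i) (\<lambda>x. (f i x)\<^sup>2)"
    and centred: "\<And>i. i \<in> I \<Longrightarrow> integral\<^sup>L (M i) (f i) = 0"
  shows integrable_sum_components_square:
      "integrable (PiM I M) (\<lambda>\<omega>. (\<Sum>i\<in>I. f i (\<omega> i))\<^sup>2)"
    and integral_sum_components_square:
      "(\<integral>\<omega>. (\<Sum>i\<in>I. f i (\<omega> i))\<^sup>2 \<partial>PiM I M) = (\<Sum>i\<in>I. \<integral>x. (f i x)\<^sup>2 \<partial>M i)"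
proof -
  have int: "integrable (M i) (f i)" if "i \<in> I" for i
    using that by (blast intro: M.square_integrable_imp_integrable meas square_int)
  have cross: "integrable (PiM I M) (\<lambda>\<omega>. f i (\<omega> i) * f k (\<omega> k)) \<and>
      (\<integral>\<omega>. f i (\<omega> i) * f k (\<omega> k) \<partial>PiM I M) = (if i = k then \<integral>x. (f i x)\<^sup>2 \<partial>M i else 0)"
    if "i \<in> I" "k \<in> I" for i k
  proof (cases "i = k")
    case True
    then show ?thesis
      using that square_int integrable_PiM_component[of i "\<lambda>x. (f i x)\<^sup>2"]
        integral_PiM_component[of i "\<lambda>x. (f i x)\<^sup>2"]
      by (simp add: power2_eq_square)
  next
    case False
    then show ?thesis
      using that int centred integrable_PiM_components_mult integral_PiM_components_mult by simp
  qed
  have square: "(\<Sum>i\<in>I. f i (\<omega> i))\<^sup>2 = (\<Sum>i\<in>I. \<Sum>k\<in>I. f i (\<omega> i) * f k (\<omega> k))" for \<omega>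
    by (simp add: power2_eq_square sum_product)
  show "integrable (PiM I M) (\<lambda>\<omega>. (\<Sum>i\<in>I. f i (\<omega> i))\<^sup>2)"
    unfolding square using cross by (intro Bochner_Integration.integrable_sum) auto
  have "(\<integral>\<omega>. (\<Sum>i\<in>I. f i (\<omega> i))\<^sup>2 \<partial>PiM I M)
      = (\<Sum>i\<in>I. \<Sum>k\<in>I. \<integral>\<omega>. f i (\<omega> i) * f k (\<omega> k) \<partial>PiM I M)"
    unfolding square using cross
    by (simp add: Bochner_Integration.integral_sum Bochner_Integration.integrable_sum)
  also have "\<dots> = (\<Sum>i\<in>I. \<Sum>k\<in>I. if i = k then \<integral>x. (f i x)\<^sup>2 \<partial>M i else 0)"
    using cross by (intro sum.cong) auto
  finally show "(\<integral>\<omega>. (\<Sum>i\<in>I. f i (\<omega> i))\<^sup>2 \<partial>PiM I M) = (\<Sum>i\<in>I. \<integral>x. (f i x)\<^sup>2 \<partial>M i)"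
    by (simp add: sum.delta' finite_index)
qed

lemma measure_sum_components_ge:
  fixes f :: "'a \<Rightarrow> 'b \<Rightarrow> real"
  assumes meas: "\<And>i. i \<in> I \<Longrightarrow> f i \<in> borel_measurable (M i)"
    and square_int: "\<And>i. i \<in> I \<Longrightarrow> integrable (M i) (\<lambda>x. (f i x)\<^sup>2)"
    and centred: "\<And>i. i \<in> I \<Longrightarrow> integral\<^sup>L (M i) (f i) = 0"
    and "0 < t"
  shows "measure (PiM I M) {\<omega> \<in> space (PiM I M). t \<le> \<bar>\<Sum>i\<in>I. f i (\<omega> i)\<bar>}
    \<le> (\<Sum>i\<in>I. \<integral>x. (f i x)\<^sup>2 \<partial>M i) / t\<^sup>2"
proof -
  have "(\<lambda>\<omega>. f i (\<omega> i)) \<in> borel_measurable (PiM I M)" if "i \<in> I" for i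
    using that meas by (intro measurable_compose[OF measurable_component_singleton]) auto
  then have "(\<lambda>\<omega>. \<Sum>i\<in>I. f i (\<omega> i)) \<in> borel_measurable (PiM I M)"
    by (intro borel_measurable_sum) auto
  moreover have "integrable (PiM I M) (\<lambda>\<omega>. (\<Sum>i\<in>I. f i (\<omega> i))\<^sup>2)"
    using meas square_int centred by (rule integrable_sum_components_square)
  ultimately have "measure (PiM I M) {\<omega> \<in> space (PiM I M). t \<le> \<bar>\<Sum>i\<in>I. f i (\<omega> i)\<bar>}
      \<le> (\<integral>\<omega>. (\<Sum>i\<in>I. f i (\<omega> i))\<^sup>2 \<partial>PiM I M) / t\<^sup>2"
    using \<open>0 < t\<close> by (rule second_moment_method)
  also have "\<dots> = (\<Sum>i\<in>I. \<integral>x. (f i x)\<^sup>2 \<partial>M i) / t\<^sup>2"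
    using meas square_int centred by (subst integral_sum_components_square) auto
  finally show ?thesis .
qed

end

section \<open>Riemann sums\<close>

lemma integral_uniform_partition:
  fixes G :: "real \<Rightarrow> real"
  assumes G: "continuous_on {0..1} G" and "0 < N"
  shows "integral {0..1} G = (\<Sum>k<N. integral {real k / real N..real (Suc k) / real N} G)"
proof -
  have "integral {0..real n / real N} G = (\<Sum>k<n. integral {real k / real N..real (Suc k) / real N} G)"
    if "n \<le> N" for n
    using that
  proof (induction n)
    case (Suc n)
    have "{0..real (Suc n) / real N} \<subseteq> {0..1}" using Suc.prems by (auto simp: field_simps)
    then have int: "G integrable_on {0..real (Suc n) / real N}"
      by (intro integrable_continuous_interval continuous_on_subset[OF G])
    have "integral {0..real n / real N} G + integral {real n / real N..real (Suc n) / real N} G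
        = integral {0..real (Suc n) / real N} G"
      by (rule Henstock_Kurzweil_Integration.integral_combine[OF _ _ int]) (auto simp: divide_right_mono)
    then show ?case using Suc by simp
  qed simp
  from this[of N] show ?thesis using \<open>0 < N\<close> by simp
qed

lemma integral_minus_left_endpoint_le:
  fixes G :: "real \<Rightarrow> real"
  assumes "G integrable_on {a..b}" "a \<le> b" and close: "\<And>y. y \<in> {a..b} \<Longrightarrow> \<bar>G y - G a\<bar> \<le> e"
  shows "\<bar>integral {a..b} G - (b - a) * G a\<bar> \<le> (b - a) * e"
proof -
  have diff: "((\<lambda>y. G y - G a) has_integral (integral {a..b} G - (b - a) * G a)) (cbox a b)"
    using has_integral_diff[OF integrable_integral[OF assms(1)] has_integral_const_real[of "G a" a b]]
      \<open>a \<le> b\<close> by (simp add: mult.commute)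
  have "0 \<le> e" using close[of a] \<open>a \<le> b\<close> by simp
  from has_integral_bound[OF this diff] show ?thesis
    using close \<open>a \<le> b\<close> by (simp add: mult.commute)
qed

lemma Riemann_sum_tendsto_integral:
  fixes G :: "real \<Rightarrow> real"
  assumes G: "continuous_on {0..1} G"
  shows "(\<lambda>N. \<Sum>k<N. G (real k / real N) / real N) \<longlonglongrightarrow> integral {0..1} G"
proof (rule LIMSEQ_I)
  fix r :: real assume "0 < r"
  have "uniformly_continuous_on {0..1} G"
    using G by (intro compact_uniformly_continuous) auto
  then obtain d where "0 < d"
    and d: "\<And>x y. x \<in> {0..1} \<Longrightarrow> y \<in> {0..1} \<Longrightarrow> dist y x < d \<Longrightarrow> dist (G y) (G x) < r / 2"
    using \<open>0 < r\<close> unfolding uniformly_continuous_on_def by (metis half_gt_zero)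
  obtain N0 :: nat where N0: "1 / d < real N0" using reals_Archimedean2 by blast
  have "norm ((\<Sum>k<N. G (real k / real N) / real N) - integral {0..1} G) < r" if "N0 \<le> N" for N
  proof -
    have "real N0 \<le> real N" using that by simp
    then have "1 / d < real N" using N0 by linarith
    moreover have "0 < 1 / d" using \<open>0 < d\<close> by simp
    ultimately have "0 < real N" by linarith
    then have "0 < N" and "1 / real N < d"
      using \<open>1 / d < real N\<close> \<open>0 < d\<close> by (simp_all add: field_simps)
    have cell: "\<bar>integral {real k / real N..real (Suc k) / real N} G - G (real k / real N) / real N\<bar>
        \<le> r / 2 / real N" if "k < N" for k
    proof -
      let ?a = "real k / real N" and ?b = "real (Suc k) / real N"
      have ab: "0 \<le> ?a" "?a \<le> ?b" "?b - ?a = 1 / real N" "{?a..?b} \<subseteq> {0..1}"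
        using \<open>k < N\<close> by (auto simp: field_simps)
      have "\<bar>G y - G ?a\<bar> \<le> r / 2" if "y \<in> {?a..?b}" for y
      proof -
        have "0 \<le> y" using ab(1) that by (meson atLeastAtMost_iff order_trans)
        then have "y \<in> {0..1}" "dist y ?a < d"
          using ab that \<open>1 / real N < d\<close> by (auto simp: dist_real_def)
        then show ?thesis using d[of ?a y] ab by (simp add: dist_real_def)
      qed
      moreover have "G integrable_on {?a..?b}"
        using ab by (intro integrable_continuous_interval continuous_on_subset[OF G])
      ultimately show ?thesis
        using integral_minus_left_endpoint_le[of G ?a ?b "r / 2"] ab by simp
    qed
    have "\<bar>(\<Sum>k<N. G (real k / real N) / real N) - integral {0..1} G\<bar>
        = \<bar>\<Sum>k<N. integral {real k / real N..real (Suc k) / real N} G - G (real k / real N) / real N\<bar>"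
      unfolding integral_uniform_partition[OF G \<open>0 < N\<close>] by (simp add: sum_subtractf abs_minus_commute)
    also have "\<dots> \<le> (\<Sum>k<N. r / 2 / real N)"
      using cell by (intro order.trans[OF sum_abs] sum_mono) auto
    also have "\<dots> < r" using \<open>0 < N\<close> \<open>0 < r\<close> by simp
    finally show ?thesis by simp
  qed
  then show "\<exists>N0. \<forall>N\<ge>N0. norm ((\<Sum>k<N. G (real k / real N) / real N) - integral {0..1} G) < r"
    by blast
qed

lemma Riemann_sum_perturbed_tendsto:
  fixes G :: "real \<Rightarrow> real" and r :: "nat \<Rightarrow> nat \<Rightarrow> real"
  assumes G: "continuous_on {0..1} G"
    and bounded: "eventually (\<lambda>N. \<forall>k<N. \<bar>r N k\<bar> \<le> C) sequentially"
    and defects: "\<And>N k. k \<notin> D N \<Longrightarrow> r N k = c" "\<And>N. finite (D N)" "\<And>N. card (D N) \<le> m"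
  shows "(\<lambda>N. \<Sum>k<N. G (real k / real N) / real N * r N k) \<longlonglongrightarrow> c * integral {0..1} G"
proof -
  obtain B where B: "\<And>y. y \<in> {0..1} \<Longrightarrow> \<bar>G y\<bar> \<le> B"
    using compact_imp_bounded[OF compact_continuous_image[OF G]] unfolding bounded_iff by fastforce
  define E where "E N = (\<Sum>k<N. G (real k / real N) / real N * (r N k - c))" for N
  have "eventually (\<lambda>N. norm (E N) \<le> real m * (B * (C + \<bar>c\<bar>)) / real N) sequentially"
    using bounded
  proof eventually_elim
    case (elim N)
    have summand_le: "\<bar>G (real k / real N) / real N * (r N k - c)\<bar>
        \<le> (if k \<in> D N then B * (C + \<bar>c\<bar>) / real N else 0)" if "k < N" for k
    proof (cases "k \<in> D N")
      case True
      have "\<bar>G (real k / real N)\<bar> \<le> B" "\<bar>r N k - c\<bar> \<le> C + \<bar>c\<bar>"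
        using B[of "real k / real N"] elim that by auto
      then show ?thesis
        using True by (simp add: abs_mult divide_right_mono mult_mono' order.trans[OF abs_ge_zero])
    qed (simp add: defects)
    have "\<bar>E N\<bar> \<le> (\<Sum>k<N. if k \<in> D N then B * (C + \<bar>c\<bar>) / real N else 0)"
      unfolding E_def using summand_le by (intro order.trans[OF sum_abs] sum_mono) auto
    also have "\<dots> = real (card ({..<N} \<inter> D N)) * (B * (C + \<bar>c\<bar>) / real N)"
      by (simp add: sum.If_cases)
    also have "\<dots> \<le> real m * (B * (C + \<bar>c\<bar>) / real N)"
    proof (rule mult_right_mono)
      have "card ({..<N} \<inter> D N) \<le> m"
        using defects by (meson card_mono inf_le2 order.trans)
      then show "real (card ({..<N} \<inter> D N)) \<le> real m" by simp
      show "0 \<le> B * (C + \<bar>c\<bar>) / real N"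
        using B[of 0] elim by (cases N) (auto intro!: mult_nonneg_nonneg divide_nonneg_nonneg)
    qed
    finally show ?case by simp
  qed
  then have "E \<longlonglongrightarrow> 0"
    by (rule Lim_null_comparison[OF _ lim_const_over_n])
  moreover have "(\<lambda>N. \<Sum>k<N. G (real k / real N) / real N) \<longlonglongrightarrow> integral {0..1} G"
    by (rule Riemann_sum_tendsto_integral[OF G])
  ultimately have "(\<lambda>N. E N + c * (\<Sum>k<N. G (real k / real N) / real N)) \<longlonglongrightarrow> 0 + c * integral {0..1} G"
    by (intro tendsto_intros)
  moreover have "E N + c * (\<Sum>k<N. G (real k / real N) / real N)
      = (\<Sum>k<N. G (real k / real N) / real N * r N k)" for N
    unfolding E_def sum_distrib_left sum.distrib[symmetric] by (intro sum.cong refl) (simp add: right_diff_distrib)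
  ultimately show ?thesis by simp
qed

section \<open>The distributions \<open>P\<^sub>\<phi>\<close> for a bounded rate\<close>

locale bounded_rate =
  fixes g :: "nat \<Rightarrow> real"
  assumes rate_pos: "\<And>n. 0 < n \<Longrightarrow> 0 < g n"
    and rate_le_1: "\<And>n. g n \<le> 1"
    and rate_tendsto_1: "g \<longlonglongrightarrow> 1"
begin

lemma gfact_pos: "0 < gfact g n"
  unfolding gfact_def by (rule prod_pos) (auto intro: rate_pos)

lemma gfact_le_1: "gfact g n \<le> 1"
  unfolding gfact_def by (rule prod_le_1) (auto intro: rate_le_1 less_imp_le[OF rate_pos])

lemma gfact_Suc: "gfact g (Suc n) = gfact g n * g (Suc n)"
  unfolding gfact_def by (simp add: prod.nat_ivl_Suc' mult.commute)

lemma gfact_0 [simp]: "gfact g 0 = 1"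
  by (simp add: gfact_def)

lemma summable_moment:
  assumes "0 \<le> \<phi>" "\<phi> < 1"
  shows "summable (\<lambda>n. real n ^ k * (\<phi> ^ n / gfact g n))"
proof -
  define r where "r n = (real (Suc n) / real n) ^ k * \<phi> / g (Suc n)" for n
  have "r \<longlonglongrightarrow> 1 ^ k * \<phi> / 1"
    unfolding r_def using LIMSEQ_Suc[OF rate_tendsto_1]
    by (intro tendsto_divide tendsto_mult tendsto_power LIMSEQ_Suc_n_over_n tendsto_const) auto
  then have "r \<longlonglongrightarrow> \<phi>" by simp
  moreover have "\<phi> < (1 + \<phi>) / 2" using assms by simp
  ultimately have "eventually (\<lambda>n. r n < (1 + \<phi>) / 2) sequentially"
    by (rule order_tendstoD(2))
  then obtain N0 where N0: "\<And>n. n \<ge> N0 \<Longrightarrow> r n < (1 + \<phi>) / 2"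
    by (auto simp: eventually_sequentially)
  show ?thesis
  proof (rule summable_ratio_test[where c = "(1 + \<phi>) / 2" and N = "max 1 N0"])
    show "(1 + \<phi>) / 2 < 1" using assms by simp
    fix n assume n: "max 1 N0 \<le> n"
    have "0 < g (Suc n)" by (rule rate_pos) simp
    then have "real (Suc n) ^ k * (\<phi> ^ Suc n / gfact g (Suc n))
        = r n * (real n ^ k * (\<phi> ^ n / gfact g n))" and "0 \<le> r n"
      using n gfact_pos[of n] assms unfolding r_def gfact_Suc
      by (simp_all add: field_simps power_divide)
    then have "norm (real (Suc n) ^ k * (\<phi> ^ Suc n / gfact g (Suc n)))
        = r n * norm (real n ^ k * (\<phi> ^ n / gfact g n))"
      by (simp add: abs_mult)
    also have "\<dots> \<le> (1 + \<phi>) / 2 * norm (real n ^ k * (\<phi> ^ n / gfact g n))"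
      using N0[of n] n by (intro mult_right_mono) auto
    finally show "norm (real (Suc n) ^ k * (\<phi> ^ Suc n / gfact g (Suc n)))
        \<le> (1 + \<phi>) / 2 * norm (real n ^ k * (\<phi> ^ n / gfact g n))" .
  qed
qed

lemma summable_Zpart: "0 \<le> \<phi> \<Longrightarrow> \<phi> < 1 \<Longrightarrow> summable (\<lambda>n. \<phi> ^ n / gfact g n)"
  using summable_moment[of \<phi> 0] by simp

lemma Zpart_ge_1:
  assumes "0 \<le> \<phi>" "\<phi> < 1"
  shows "1 \<le> Zpart g \<phi>"
proof -
  have "(\<Sum>n\<in>{0}. \<phi> ^ n / gfact g n) \<le> (\<Sum>n. \<phi> ^ n / gfact g n)"
    using summable_Zpart[OF assms] gfact_pos assms
    by (intro sum_le_suminf) (auto intro!: divide_nonneg_pos)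
  then show ?thesis by (simp add: Zpart_def)
qed

lemma Zpart_ge_geometric:
  assumes "0 \<le> \<phi>" "\<phi> < 1"
  shows "1 / (1 - \<phi>) \<le> Zpart g \<phi>"
proof -
  have "(\<Sum>n. \<phi> ^ n) \<le> (\<Sum>n. \<phi> ^ n / gfact g n)"
    using assms gfact_pos gfact_le_1 summable_Zpart[OF assms]
    by (intro suminf_le) (auto simp: le_divide_eq mult_left_le)
  then show ?thesis using suminf_geometric[of \<phi>] assms by (simp add: Zpart_def)
qed

lemma Zpart_strict_mono:
  assumes "0 \<le> \<phi>" "\<phi> < \<psi>" "\<psi> < 1"
  shows "Zpart g \<phi> < Zpart g \<psi>"
proof -
  have s: "summable (\<lambda>n. \<psi> ^ n / gfact g n - \<phi> ^ n / gfact g n)"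
    using assms by (intro summable_diff summable_Zpart) auto
  have "0 < (\<Sum>n. \<psi> ^ n / gfact g n - \<phi> ^ n / gfact g n)"
  proof (rule suminf_pos2[OF s, of 1])
    show "0 \<le> \<psi> ^ n / gfact g n - \<phi> ^ n / gfact g n" for n
      using gfact_pos[of n] assms by (auto intro!: divide_right_mono power_mono)
    show "0 < \<psi> ^ 1 / gfact g 1 - \<phi> ^ 1 / gfact g 1"
      using gfact_pos[of 1] assms by (simp add: divide_strict_right_mono)
  qed
  also have "\<dots> = Zpart g \<psi> - Zpart g \<phi>"
    unfolding Zpart_def using assms by (intro suminf_diff[symmetric] summable_Zpart) auto
  finally show ?thesis by simp
qed

lemma Pdist_nonneg: "0 \<le> \<phi> \<Longrightarrow> \<phi> < 1 \<Longrightarrow> 0 \<le> Pdist g \<phi> n"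
  unfolding Pdist_def using gfact_pos[of n] Zpart_ge_1[of \<phi>] by simp

lemma Pdist_sums: 
  assumes "0 \<le> \<phi>" "\<phi> < 1"
  shows "Pdist g \<phi> sums 1"
proof -
  have "(\<lambda>n. \<phi> ^ n / gfact g n / Zpart g \<phi>) sums (Zpart g \<phi> / Zpart g \<phi>)"
    using summable_Zpart[OF assms] unfolding Zpart_def by (intro sums_divide summable_sums)
  then show ?thesis using Zpart_ge_1[OF assms] unfolding Pdist_def by (simp add: divide_divide_eq_left)
qed

lemma summable_Pdist_moment:
  assumes "0 \<le> \<phi>" "\<phi> < 1"
  shows "summable (\<lambda>n. Pdist g \<phi> n * real n ^ k)"
  using summable_divide[OF summable_moment[OF assms, of k], of "Zpart g \<phi>"]
  unfolding Pdist_def by (simp add: field_simps)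

lemma Pdist_moment_le:
  assumes "0 \<le> \<phi>" "\<phi> \<le> \<phi>'" "\<phi>' < 1"
  shows "(\<Sum>n. Pdist g \<phi> n * real n ^ k) \<le> (\<Sum>n. real n ^ k * (\<phi>' ^ n / gfact g n))"
proof (rule suminf_le)
  fix n
  have "Pdist g \<phi> n \<le> \<phi> ^ n / gfact g n"
    unfolding Pdist_def using assms Zpart_ge_1[of \<phi>] gfact_pos[of n]
    by (simp add: divide_le_eq_1 frac_le mult_le_cancel_left1 )
  also have "\<dots> \<le> \<phi>' ^ n / gfact g n"
    using gfact_pos[of n] assms by (intro divide_right_mono power_mono) auto
  finally have "Pdist g \<phi> n * real n ^ k \<le> (\<phi>' ^ n / gfact g n) * real n ^ k"
    by (rule mult_right_mono) simp
  then show "Pdist g \<phi> n * real n ^ k \<le> real n ^ k * (\<phi>' ^ n / gfact g n)"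
    by (simp only: mult.commute)
  show "summable (\<lambda>n. Pdist g \<phi> n * real n ^ k)"
    using summable_Pdist_moment assms by simp
  show "summable (\<lambda>n. real n ^ k * (\<phi>' ^ n / gfact g n))"
    using summable_moment assms by simp
qed

lemma Rmean_sums: "0 \<le> \<phi> \<Longrightarrow> \<phi> < 1 \<Longrightarrow> (\<lambda>n. real n * Pdist g \<phi> n) sums Rmean g \<phi>"
  unfolding Rmean_def using summable_Pdist_moment[of \<phi> 1]
  by (intro summable_sums) (simp add: mult.commute)

lemma Rmean_eq:
  assumes "0 \<le> \<phi>" "\<phi> < 1"
  shows "Rmean g \<phi> = (\<Sum>n. real n * (\<phi> ^ n / gfact g n)) / Zpart g \<phi>"
  unfolding Rmean_def Pdist_def
  using suminf_divide[OF summable_moment[OF assms, of 1], of "Zpart g \<phi>"] by simp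

lemma Rmean_0: "Rmean g 0 = 0"
proof -
  have "(\<lambda>n. real n * Pdist g 0 n) = (\<lambda>_. 0)"
    by (auto simp: Pdist_def power_0_left)
  then show ?thesis by (simp add: Rmean_def)
qed

lemma Pdist_tilt:
  assumes "0 < \<phi>" "\<phi> < 1" "0 \<le> \<psi>" "\<psi> < 1"
  shows "Pdist g \<psi> n = Zpart g \<phi> / Zpart g \<psi> * (\<psi> / \<phi>) ^ n * Pdist g \<phi> n"
  unfolding Pdist_def using assms gfact_pos[of n] Zpart_ge_1[of \<psi>] Zpart_ge_1[of \<phi>]
  by (simp add: field_simps power_divide)

text \<open>With \<open>Pdist g \<psi> n = s Q\<^sup>n Pdist g \<phi> n\<close>, \<open>Q > 1 > s\<close>, the summand
  \<open>(n - m) (Pdist g \<psi> n - Pdist g \<phi> n)\<close> is nonnegative for the threshold \<open>m\<close> with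
  \<open>s Q\<^sup>m = 1\<close>, and strictly positive at \<open>n = 0\<close>; summing gives \<open>Rmean g \<psi> - Rmean g \<phi>\<close>.\<close>
lemma Rmean_strict_mono_pos:
  assumes "0 < \<phi>" "\<phi> < \<psi>" "\<psi> < 1"
  shows "Rmean g \<phi> < Rmean g \<psi>"
proof -
  define Q where "Q = \<psi> / \<phi>"
  define s where "s = Zpart g \<phi> / Zpart g \<psi>"
  define m where "m = log Q (1 / s)"
  have Q: "1 < Q" unfolding Q_def using assms by simp
  have s: "0 < s" "s < 1"
    unfolding s_def using Zpart_ge_1[of \<phi>] Zpart_strict_mono[of \<phi> \<psi>] assms by auto
  have Qm: "Q powr m = 1 / s" and m: "0 < m"
    unfolding m_def using Q s by simp_all
  have \<phi>: "0 \<le> \<phi>" "\<phi> < 1" using assms by simp_all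
  let ?t = "\<lambda>n. (real n - m) * (Pdist g \<psi> n - Pdist g \<phi> n)"
  have t_eq: "?t n = (real n - m) * (s * Q ^ n - 1) * Pdist g \<phi> n" for n
    using Pdist_tilt[of \<phi> \<psi> n] assms unfolding Q_def s_def by (simp add: algebra_simps)
  have "(\<lambda>n. (real n * Pdist g \<psi> n - real n * Pdist g \<phi> n) - m * (Pdist g \<psi> n - Pdist g \<phi> n))
        sums ((Rmean g \<psi> - Rmean g \<phi>) - m * (1 - 1))"
    using assms by (intro sums_diff sums_mult Rmean_sums Pdist_sums) auto
  then have t_sums: "?t sums (Rmean g \<psi> - Rmean g \<phi>)"
    by (simp add: algebra_simps)
  have "0 \<le> (real n - m) * (s * Q ^ n - 1)" for n
    using Q s(1) Qm by (rule threshold_product_nonneg)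
  then have t_nonneg: "0 \<le> ?t n" for n
    unfolding t_eq using Pdist_nonneg[OF \<phi>] by simp
  have "0 < ?t 0"
    unfolding t_eq using m s Pdist_def Zpart_ge_1[OF \<phi>] by (simp add: divide_neg_pos mult_pos_neg)
  then have "0 < suminf ?t"
    using t_sums t_nonneg by (intro suminf_pos2[of _ 0]) (auto dest: sums_summable)
  then show ?thesis using t_sums sums_unique by fastforce
qed

lemma Rmean_pos:
  assumes "0 < \<psi>" "\<psi> < 1"
  shows "0 < Rmean g \<psi>"
  unfolding Rmean_def
proof (rule suminf_pos2[of _ 1])
  show "summable (\<lambda>n. real n * Pdist g \<psi> n)"
    using Rmean_sums[of \<psi>] assms sums_summable by auto
  show "0 \<le> real n * Pdist g \<psi> n" for n
    using Pdist_nonneg[of \<psi> n] assms by simp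
  show "0 < real 1 * Pdist g \<psi> 1"
    unfolding Pdist_def using assms gfact_pos[of 1] Zpart_ge_1[of \<psi>] by simp
qed

lemma Rmean_strict_mono:
  assumes "0 \<le> \<phi>" "\<phi> < \<psi>" "\<psi> < 1"
  shows "Rmean g \<phi> < Rmean g \<psi>"
  using assms Rmean_pos[of \<psi>] Rmean_strict_mono_pos[of \<phi> \<psi>]
  by (cases "\<phi> = 0") (auto simp: Rmean_0)

lemma Rmean_less_iff:
  assumes "0 \<le> \<phi>" "\<phi> < 1" "0 \<le> \<psi>" "\<psi> < 1"
  shows "Rmean g \<phi> < Rmean g \<psi> \<longleftrightarrow> \<phi> < \<psi>"
  using Rmean_strict_mono[of \<phi> \<psi>] Rmean_strict_mono[of \<psi> \<phi>] assms
  by (cases \<phi> \<psi> rule: linorder_cases) auto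

lemma Rmean_nonneg: "0 \<le> \<phi> \<Longrightarrow> \<phi> < 1 \<Longrightarrow> 0 \<le> Rmean g \<phi>"
  using Rmean_strict_mono[of 0 \<phi>] by (cases "\<phi> = 0") (auto simp: Rmean_0)

lemma abs_Rmean_le_moment:
  assumes "0 \<le> \<phi>" "\<phi> \<le> \<phi>'" "\<phi>' < 1"
  shows "\<bar>Rmean g \<phi>\<bar> \<le> (\<Sum>n. real n * (\<phi>' ^ n / gfact g n))"
  using Pdist_moment_le[OF assms, of 1] Rmean_nonneg[of \<phi>] assms
  by (simp add: Rmean_def mult.commute)

lemma continuous_on_Rmean:
  assumes "b < 1"
  shows "continuous_on {0..b} (Rmean g)"
proof -
  define Z where "Z = (\<lambda>x::real. \<Sum>n. (1 / gfact g n) * x ^ n)"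
  define A where "A = (\<lambda>x::real. \<Sum>n. (real n / gfact g n) * x ^ n)"
  have "isCont (\<lambda>x. A x / Z x) x" if x: "x \<in> {0..b}" for x
  proof -
    define K where "K = (1 + x) / 2"
    have K: "0 \<le> K" "K < 1" "norm x < norm K" using x assms unfolding K_def by auto
    have "summable (\<lambda>n. (1 / gfact g n) * K ^ n)"
      using summable_moment[OF K(1,2), of 0] by simp
    then have "isCont Z x" unfolding Z_def by (rule isCont_powser[OF _ K(3)])
    have "summable (\<lambda>n. (real n / gfact g n) * K ^ n)"
      using summable_moment[OF K(1,2), of 1] by simp
    then have "isCont A x" unfolding A_def by (rule isCont_powser[OF _ K(3)])
    moreover have "Z x \<noteq> 0"
      using Zpart_ge_1[of x] x assms unfolding Z_def Zpart_def by simp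
    ultimately show ?thesis using \<open>isCont Z x\<close> by (simp add: isCont_divide)
  qed
  then have "continuous_on {0..b} (\<lambda>x. A x / Z x)"
    by (intro continuous_at_imp_continuous_on) auto
  moreover have "A x / Z x = Rmean g x" if "x \<in> {0..b}" for x
    using that assms Rmean_eq[of x] unfolding A_def Z_def Zpart_def by simp
  ultimately show ?thesis
    using continuous_on_cong[of "{0..b}" "{0..b}" "\<lambda>x. A x / Z x" "Rmean g"] by simp
qed

lemma Rmean_ge_tail:
  assumes "0 \<le> \<phi>" "\<phi> < 1"
  shows "real M * (1 - (\<Sum>n<M. Pdist g \<phi> n)) \<le> Rmean g \<phi>"
proof -
  let ?low = "\<lambda>n. if n \<in> {..<M} then real M * Pdist g \<phi> n else 0"
  have "(\<lambda>n. real M * Pdist g \<phi> n) sums (real M * 1)"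
    by (rule sums_mult[OF Pdist_sums[OF assms]])
  moreover have "?low sums (\<Sum>n<M. real M * Pdist g \<phi> n)"
    by (rule sums_If_finite_set) simp
  ultimately have diff_sums: "(\<lambda>n. real M * Pdist g \<phi> n - ?low n)
      sums (real M * (1 - (\<Sum>n<M. Pdist g \<phi> n)))"
    unfolding right_diff_distrib sum_distrib_left by (rule sums_diff)
  have "real M * Pdist g \<phi> n - ?low n \<le> real n * Pdist g \<phi> n" for n
    using Pdist_nonneg[OF assms, of n] by (auto intro: mult_right_mono)
  from sums_le[OF this diff_sums Rmean_sums[OF assms]] show ?thesis .
qed

text \<open>Near \<open>\<phi> = 1\<close> the partition function is at least geometric, so the mass
  \<open>Pdist g \<phi>\<close> puts below any level \<open>M\<close> becomes small.\<close>
lemma Rmean_exceeds: "\<exists>b. 0 \<le> b \<and> b < 1 \<and> c < Rmean g b"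
proof -
  define M :: nat where "M = nat \<lceil>2 * c\<rceil> + 1"
  define B where "B = (\<Sum>n<M. 1 / gfact g n)"
  define b where "b = 1 - 1 / (2 * B)"
  have M: "2 * c < real M" "0 < M" unfolding M_def by linarith+
  have "(\<Sum>n\<in>{0}. 1 / gfact g n) \<le> B"
    unfolding B_def using M gfact_pos by (intro sum_mono2) (auto intro: less_imp_le)
  then have B: "1 \<le> B" by simp
  have b: "0 \<le> b" "b < 1" unfolding b_def using B by (auto simp: field_simps)
  have Z: "1 / (1 - b) \<le> Zpart g b" "0 < Zpart g b"
    using Zpart_ge_geometric[OF b] Zpart_ge_1[OF b] by auto
  have "(\<Sum>n<M. Pdist g b n) \<le> (\<Sum>n<M. 1 / gfact g n / Zpart g b)"
  proof (intro sum_mono)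
    fix n
    have "b ^ n \<le> 1" using b by (intro power_le_one) auto
    then show "Pdist g b n \<le> 1 / gfact g n / Zpart g b"
      unfolding Pdist_def using gfact_pos[of n] Z by (simp add: divide_right_mono frac_le)
  qed
  also have "\<dots> = B / Zpart g b" unfolding B_def by (simp add: sum_divide_distrib)
  also have "\<dots> \<le> B / (1 / (1 - b))"
    using Z B b by (intro divide_left_mono) auto
  also have "\<dots> = 1 / 2" unfolding b_def using B by simp
  finally have "real M * (1 / 2) \<le> real M * (1 - (\<Sum>n<M. Pdist g b n))"
    by (intro mult_left_mono) auto
  then have "real M / 2 \<le> Rmean g b" using Rmean_ge_tail[OF b, of M] by simp
  then show ?thesis using M b by (intro exI[of _ b]) auto
qed

lemma
  assumes "0 \<le> c"
  shows Phi_nonneg: "0 \<le> Phi g c" and Phi_less_1: "Phi g c < 1" and Rmean_Phi: "Rmean g (Phi g c) = c"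
proof -
  obtain b where b: "0 \<le> b" "b < 1" "c < Rmean g b" using Rmean_exceeds by blast
  then obtain x where x: "0 \<le> x" "x \<le> b" "Rmean g x = c"
    using assms Rmean_0 IVT'[of "Rmean g" 0 c b] continuous_on_Rmean[of b] by auto
  have "Phi g c = x" unfolding Phi_def
  proof (rule the_equality)
    show "0 \<le> x \<and> x < 1 \<and> Rmean g x = c" using x b by simp
    show "y = x" if "0 \<le> y \<and> y < 1 \<and> Rmean g y = c" for y
      using Rmean_less_iff[of x y] Rmean_less_iff[of y x] x b that by force
  qed
  then show "0 \<le> Phi g c" "Phi g c < 1" "Rmean g (Phi g c) = c" using x b by auto
qed

end

lemma bounded_rate_of_mono:
  fixes g :: "nat \<Rightarrow> real"
  assumes "\<And>n. 0 \<le> g n" "\<And>n. g n = 0 \<longleftrightarrow> n = 0" "mono g" "g \<longlonglongrightarrow> 1"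
  shows "bounded_rate g"
proof
  show "0 < g n" if "0 < n" for n
    using assms(1,2)[of n] that by linarith
  show "g n \<le> 1" for n
    using assms(3,4) by (rule incseq_le)
qed (rule assms(4))

definition Pdist_measure :: "(nat \<Rightarrow> real) \<Rightarrow> real \<Rightarrow> nat measure" where
  "Pdist_measure g \<phi> = point_measure UNIV (\<lambda>n. ennreal (Pdist g \<phi> n))"

lemma RN_eq_PiM_Pdist_measure:
  "RN g J x \<beta> lam c N = PiM {..<N} (\<lambda>k. Pdist_measure g (site_fug g J x \<beta> lam c N k))"
  by (simp add: RN_def Pdist_measure_def)

lemma sets_Pdist_measure [measurable_cong]: "sets (Pdist_measure g \<phi>) = sets (count_space UNIV)"
  by (simp add: Pdist_measure_def sets_point_measure_count_space)

context bounded_rate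
begin

lemma prob_space_Pdist_measure: "0 \<le> \<phi> \<Longrightarrow> \<phi> < 1 \<Longrightarrow> prob_space (Pdist_measure g \<phi>)"
  unfolding Pdist_measure_def by (intro prob_space_point_measure_nat Pdist_nonneg Pdist_sums)

lemma
  assumes "0 \<le> \<phi>" "\<phi> < 1"
  shows integrable_Pdist_measure_power: "integrable (Pdist_measure g \<phi>) (\<lambda>n. real n ^ k)"
    and integral_Pdist_measure_power:
      "(\<integral>n. real n ^ k \<partial>Pdist_measure g \<phi>) = (\<Sum>n. Pdist g \<phi> n * real n ^ k)"
  using summable_Pdist_moment[OF assms, of k] Pdist_nonneg[OF assms]
    integrable_point_measure_nat[of "Pdist g \<phi>" "\<lambda>n. real n ^ k"]
    integral_point_measure_nat[of "Pdist g \<phi>" "\<lambda>n. real n ^ k"]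
  by (simp_all add: Pdist_measure_def)

lemma integral_Pdist_measure_real:
  assumes "0 \<le> \<phi>" "\<phi> < 1"
  shows "(\<integral>n. real n \<partial>Pdist_measure g \<phi>) = Rmean g \<phi>"
  using integral_Pdist_measure_power[OF assms, of 1] by (simp add: Rmean_def mult.commute)

lemma Pdist_measure_variance_le:
  assumes "0 \<le> \<phi>" "\<phi> \<le> \<phi>'" "\<phi>' < 1"
  shows "(\<integral>n. (real n - Rmean g \<phi>)\<^sup>2 \<partial>Pdist_measure g \<phi>) \<le> (\<Sum>n. real n ^ 2 * (\<phi>' ^ n / gfact g n))"
proof -
  have \<phi>: "0 \<le> \<phi>" "\<phi> < 1" using assms by simp_all
  interpret prob_space "Pdist_measure g \<phi>" by (rule prob_space_Pdist_measure[OF \<phi>])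
  have "(\<integral>n. (real n - Rmean g \<phi>)\<^sup>2 \<partial>Pdist_measure g \<phi>)
      = (\<integral>n. (real n)\<^sup>2 \<partial>Pdist_measure g \<phi>) - (Rmean g \<phi>)\<^sup>2"
    using variance_eq[of real] integrable_Pdist_measure_power[OF \<phi>, of 1]
      integrable_Pdist_measure_power[OF \<phi>, of 2] integral_Pdist_measure_real[OF \<phi>]
    by simp
  also have "\<dots> \<le> (\<Sum>n. Pdist g \<phi> n * real n ^ 2)"
    using integral_Pdist_measure_power[OF \<phi>, of 2] by simp
  also have "\<dots> \<le> (\<Sum>n. real n ^ 2 * (\<phi>' ^ n / gfact g n))"
    using assms by (rule Pdist_moment_le)
  finally show ?thesis .
qed

lemma
  assumes "0 \<le> \<phi>" "\<phi> < 1"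
  shows integrable_Pdist_measure_centred_square:
      "integrable (Pdist_measure g \<phi>) (\<lambda>n. (a * (real n - Rmean g \<phi>))\<^sup>2)"
    and integral_Pdist_measure_centred: "(\<integral>n. a * (real n - Rmean g \<phi>) \<partial>Pdist_measure g \<phi>) = 0"
proof -
  interpret prob_space "Pdist_measure g \<phi>" by (rule prob_space_Pdist_measure[OF assms])
  show "integrable (Pdist_measure g \<phi>) (\<lambda>n. (a * (real n - Rmean g \<phi>))\<^sup>2)"
    using integrable_Pdist_measure_power[OF assms, of 1] integrable_Pdist_measure_power[OF assms, of 2]
    by (simp add: power_mult_distrib power2_diff)
  show "(\<integral>n. a * (real n - Rmean g \<phi>) \<partial>Pdist_measure g \<phi>) = 0"
    using integrable_Pdist_measure_power[OF assms, of 1] integral_Pdist_measure_real[OF assms]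
    by (simp add: prob_space)
qed

lemma measure_Pdist_product_deviation:
  assumes K: "finite K" and f: "\<And>k. k \<in> K \<Longrightarrow> 0 \<le> f k \<and> f k \<le> \<phi>'" and "\<phi>' < 1" and "0 < t"
  shows "measure (PiM K (\<lambda>k. Pdist_measure g (f k)))
      {\<xi> \<in> space (PiM K (\<lambda>k. Pdist_measure g (f k))).
        t \<le> \<bar>\<Sum>k\<in>K. a k * (real (\<xi> k) - Rmean g (f k))\<bar>}
    \<le> (\<Sum>k\<in>K. (a k)\<^sup>2) * (\<Sum>n. real n ^ 2 * (\<phi>' ^ n / gfact g n)) / t\<^sup>2"
proof -
  \<comment> \<open>The product locale wants a probability measure also at the indices outside \<open>K\<close>.\<close>
  define f' where "f' k = (if k \<in> K then f k else 0)" for k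
  have f': "0 \<le> f' k" "f' k < 1" for k
    using f \<open>\<phi>' < 1\<close> by (auto simp: f'_def intro: order.strict_trans1)
  have f'_le: "f' k \<le> \<phi>'" if "k \<in> K" for k
    using f that by (simp add: f'_def)
  have "prob_space (Pdist_measure g (f' k))" for k
    by (rule prob_space_Pdist_measure[OF f'])
  then interpret product_prob_space "\<lambda>k. Pdist_measure g (f' k)" K
    by (intro product_prob_space.intro product_sigma_finite.intro product_prob_space_axioms.intro
        prob_space_imp_sigma_finite)
  interpret finite_product_prob_space "\<lambda>k. Pdist_measure g (f' k)" K
    by unfold_locales (rule K)
  let ?F = "\<lambda>k n. a k * (real n - Rmean g (f' k))"
  have "measure (PiM K (\<lambda>k. Pdist_measure g (f' k)))
      {\<xi> \<in> space (PiM K (\<lambda>k. Pdist_measure g (f' k))). t \<le> \<bar>\<Sum>k\<in>K. ?F k (\<xi> k)\<bar>}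
    \<le> (\<Sum>k\<in>K. \<integral>n. (?F k n)\<^sup>2 \<partial>Pdist_measure g (f' k)) / t\<^sup>2"
    using \<open>0 < t\<close> integrable_Pdist_measure_centred_square[OF f'] integral_Pdist_measure_centred[OF f']
    by (intro measure_sum_components_ge) (auto simp: Pdist_measure_def)
  also have "\<dots> \<le> (\<Sum>k\<in>K. (a k)\<^sup>2 * (\<Sum>n. real n ^ 2 * (\<phi>' ^ n / gfact g n))) / t\<^sup>2"
    using Pdist_measure_variance_le[OF f'(1) f'_le \<open>\<phi>' < 1\<close>]
    by (intro divide_right_mono sum_mono) (auto simp: power_mult_distrib intro!: mult_left_mono)
  also have "\<dots> = (\<Sum>k\<in>K. (a k)\<^sup>2) * (\<Sum>n. real n ^ 2 * (\<phi>' ^ n / gfact g n)) / t\<^sup>2"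
    by (simp add: sum_distrib_right)
  finally have bound: "measure (PiM K (\<lambda>k. Pdist_measure g (f' k)))
      {\<xi> \<in> space (PiM K (\<lambda>k. Pdist_measure g (f' k))). t \<le> \<bar>\<Sum>k\<in>K. ?F k (\<xi> k)\<bar>}
    \<le> (\<Sum>k\<in>K. (a k)\<^sup>2) * (\<Sum>n. real n ^ 2 * (\<phi>' ^ n / gfact g n)) / t\<^sup>2" .
  have "PiM K (\<lambda>k. Pdist_measure g (f k)) = PiM K (\<lambda>k. Pdist_measure g (f' k))"
    by (rule PiM_cong) (simp_all add: f'_def)
  moreover have "(\<Sum>k\<in>K. ?F k (\<xi> k)) = (\<Sum>k\<in>K. a k * (real (\<xi> k) - Rmean g (f k)))" for \<xi>
    by (intro sum.cong) (simp_all add: f'_def)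
  ultimately show ?thesis using bound by simp
qed

lemma Pdist_product_weak_law:
  assumes bounded: "eventually (\<lambda>N. \<forall>k<N. 0 \<le> f N k \<and> f N k \<le> \<phi>') sequentially"
    and \<phi>': "0 \<le> \<phi>'" "\<phi>' < 1"
    and weights: "\<And>N k. k < N \<Longrightarrow> \<bar>a N k\<bar> \<le> B / real N"
    and mean: "(\<lambda>N. \<Sum>k<N. a N k * Rmean g (f N k)) \<longlonglongrightarrow> L"
    and "0 < \<delta>"
  shows "(\<lambda>N. measure (PiM {..<N} (\<lambda>k. Pdist_measure g (f N k)))
      {\<xi> \<in> space (PiM {..<N} (\<lambda>k. Pdist_measure g (f N k))).
        \<delta> < \<bar>(\<Sum>k<N. a N k * real (\<xi> k)) - L\<bar>}) \<longlonglongrightarrow> 0"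
proof -
  define A2 where "A2 = (\<Sum>n. real n ^ 2 * (\<phi>' ^ n / gfact g n))"
  have A2: "0 \<le> A2"
    unfolding A2_def using summable_moment[OF \<phi>'] gfact_pos \<phi>'
    by (intro suminf_nonneg) (auto intro!: divide_nonneg_pos)
  have "eventually (\<lambda>N. \<bar>(\<Sum>k<N. a N k * Rmean g (f N k)) - L\<bar> < \<delta> / 2) sequentially"
    using tendstoD[OF mean, of "\<delta> / 2"] \<open>0 < \<delta>\<close> by (simp add: dist_real_def)
  with bounded have "eventually (\<lambda>N. norm (measure (PiM {..<N} (\<lambda>k. Pdist_measure g (f N k)))
      {\<xi> \<in> space (PiM {..<N} (\<lambda>k. Pdist_measure g (f N k))).
        \<delta> < \<bar>(\<Sum>k<N. a N k * real (\<xi> k)) - L\<bar>}) \<le> B\<^sup>2 * A2 / (\<delta> / 2)\<^sup>2 / real N)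
      sequentially"
  proof eventually_elim
    case (elim N)
    let ?P = "PiM {..<N} (\<lambda>k. Pdist_measure g (f N k))"
    let ?dev = "\<lambda>\<xi>. \<Sum>k<N. a N k * (real (\<xi> k) - Rmean g (f N k))"
    interpret P: prob_space ?P
      using elim(1) \<phi>' by (intro prob_space_PiM prob_space_Pdist_measure) auto
    have "\<delta> / 2 \<le> \<bar>?dev \<xi>\<bar>" if "\<delta> < \<bar>(\<Sum>k<N. a N k * real (\<xi> k)) - L\<bar>" for \<xi>
    proof -
      have "?dev \<xi> = (\<Sum>k<N. a N k * real (\<xi> k)) - (\<Sum>k<N. a N k * Rmean g (f N k))"
        by (simp add: sum_subtractf right_diff_distrib)
      then show ?thesis using that elim(2) by linarith
    qed
    then have "{\<xi> \<in> space ?P. \<delta> < \<bar>(\<Sum>k<N. a N k * real (\<xi> k)) - L\<bar>}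
        \<subseteq> {\<xi> \<in> space ?P. \<delta> / 2 \<le> \<bar>?dev \<xi>\<bar>}"
      by auto
    moreover have "{\<xi> \<in> space ?P. \<delta> / 2 \<le> \<bar>?dev \<xi>\<bar>} \<in> sets ?P"
      by measurable
    ultimately have "measure ?P {\<xi> \<in> space ?P. \<delta> < \<bar>(\<Sum>k<N. a N k * real (\<xi> k)) - L\<bar>}
        \<le> measure ?P {\<xi> \<in> space ?P. \<delta> / 2 \<le> \<bar>?dev \<xi>\<bar>}"
      by (rule P.finite_measure_mono)
    also have "\<dots> \<le> (\<Sum>k<N. (a N k)\<^sup>2) * A2 / (\<delta> / 2)\<^sup>2"
      unfolding A2_def using elim(1) \<phi>' \<open>0 < \<delta>\<close>
      by (intro measure_Pdist_product_deviation) auto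
    also have "\<dots> \<le> B\<^sup>2 / real N * A2 / (\<delta> / 2)\<^sup>2"
      using sum_power2_le_uniform[of N "a N" B] weights A2
      by (intro divide_right_mono mult_right_mono) auto
    finally show ?case by (simp add: ac_simps)
  qed
  then show ?thesis by (rule Lim_null_comparison[OF _ lim_const_over_n])
qed

end

section \<open>Fugacities at the defect sites\<close>

lemma site_fug_off_defects:
  "k \<notin> (\<lambda>j. ksite (x j) N) ` J \<Longrightarrow> site_fug g J x \<beta> lam c N k = Phi g c"
  unfolding site_fug_def by auto

lemma site_fug_at_defect:
  assumes "k \<in> (\<lambda>j. ksite (x j) N) ` J"
  obtains j where "j \<in> J" "site_fug g J x \<beta> lam c N k = lam j * real N powr \<beta> j * Phi g c"
proof -
  define j where "j = (SOME j. j \<in> J \<and> k = ksite (x j) N)"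
  have "j \<in> J \<and> k = ksite (x j) N"
    unfolding j_def by (rule someI_ex) (use assms in blast)
  moreover have "site_fug g J x \<beta> lam c N k = lam j * real N powr \<beta> j * Phi g c"
    using assms unfolding site_fug_def j_def Let_def by auto
  ultimately show ?thesis using that by blast
qed

context bounded_rate
begin

text \<open>This is where the subcriticality hypothesis \<open>c < R(1/\<lambda>\<^sub>m\<^sub>a\<^sub>x)\<close> enters:
  every critical defect \<open>j\<close> has \<open>\<lambda>\<^sub>j \<Phi>(c) \<le> \<lambda>\<^sub>m\<^sub>a\<^sub>x \<Phi>(c) < 1\<close>.\<close>
lemma lambda_Phi_less_1:
  assumes "finite J" "j \<in> J" "\<beta> j = 0" and c: "0 \<le> c"
    and subcrit: "Jcrit J \<beta> lam \<noteq> {} \<Longrightarrow> c < Rmean g (1 / lambda_max J \<beta> lam)"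
  shows "lam j * Phi g c < 1"
proof (cases "lam j \<le> 1")
  case True
  then show ?thesis
    using Phi_nonneg[OF c] Phi_less_1[OF c] mult_right_mono[of "lam j" 1 "Phi g c"] by simp
next
  case False
  let ?Jc = "Jcrit J \<beta> lam"
  have j: "j \<in> ?Jc" using False assms unfolding Jcrit_def by auto
  moreover have "finite ?Jc" using \<open>finite J\<close> unfolding Jcrit_def by auto
  ultimately have le_max: "lam j \<le> lambda_max J \<beta> lam" by (auto simp: lambda_max_def)
  define b where "b = 1 / lambda_max J \<beta> lam"
  have b: "0 \<le> b" "b < 1" unfolding b_def using False le_max by auto
  have "Rmean g (Phi g c) < Rmean g b"
    using subcrit j Rmean_Phi[OF c] unfolding b_def by auto
  then have "Phi g c < b" using Rmean_less_iff[OF Phi_nonneg[OF c] Phi_less_1[OF c] b] by blast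
  then have "lambda_max J \<beta> lam * Phi g c < 1"
    using False le_max unfolding b_def by (simp add: field_simps)
  moreover have "lam j * Phi g c \<le> lambda_max J \<beta> lam * Phi g c"
    using le_max Phi_nonneg[OF c] by (rule mult_right_mono)
  ultimately show ?thesis by simp
qed

text \<open>Only defects with \<open>\<beta>\<^sub>j = 0\<close> keep a fugacity factor \<open>\<lambda>\<^sub>j\<close> in the limit; for
  \<open>\<beta>\<^sub>j < 0\<close> the factor \<open>\<lambda>\<^sub>j N\<^bsup>\<beta>\<^sub>j\<^esup>\<close> tends to \<open>0\<close>.\<close>
lemma site_fug_eventually_bounded:
  assumes "finite J" "\<And>j. j \<in> J \<Longrightarrow> 0 < lam j" "{j \<in> J. 0 < \<beta> j} = {}" "0 \<le> c"
    and subcrit: "Jcrit J \<beta> lam \<noteq> {} \<Longrightarrow> c < Rmean g (1 / lambda_max J \<beta> lam)"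
  obtains \<phi>' where "0 \<le> \<phi>'" "\<phi>' < 1"
    "eventually (\<lambda>N. \<forall>k. 0 \<le> site_fug g J x \<beta> lam c N k \<and> site_fug g J x \<beta> lam c N k \<le> \<phi>') sequentially"
proof -
  let ?\<Phi> = "Phi g c"
  define \<phi>' where "\<phi>' = Max (insert ?\<Phi> ((\<lambda>j. lam j * ?\<Phi>) ` {j \<in> J. \<beta> j = 0}))"
  have \<Phi>: "0 \<le> ?\<Phi>" "?\<Phi> < 1" using Phi_nonneg[OF \<open>0 \<le> c\<close>] Phi_less_1[OF \<open>0 \<le> c\<close>] by auto
  have fin: "finite (insert ?\<Phi> ((\<lambda>j. lam j * ?\<Phi>) ` {j \<in> J. \<beta> j = 0}))"
    using \<open>finite J\<close> by simp
  have \<phi>': "\<phi>' < 1" "?\<Phi> \<le> \<phi>'" "\<And>j. j \<in> J \<Longrightarrow> \<beta> j = 0 \<Longrightarrow> lam j * ?\<Phi> \<le> \<phi>'"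
    unfolding \<phi>'_def using Max_ge[OF fin] Max_less_iff[OF fin]
      lambda_Phi_less_1[OF \<open>finite J\<close> _ _ \<open>0 \<le> c\<close> subcrit] \<Phi> by auto
  have "eventually (\<lambda>N. \<beta> j < 0 \<longrightarrow> lam j * real N powr \<beta> j \<le> 1) sequentially" for j
  proof (cases "\<beta> j < 0")
    case True
    have "(\<lambda>N. lam j * real N powr \<beta> j) \<longlonglongrightarrow> lam j * 0"
      by (intro tendsto_mult tendsto_const tendsto_neg_powr[OF True] filterlim_real_sequentially)
    then have "eventually (\<lambda>N. lam j * real N powr \<beta> j < 1) sequentially"
      by (intro order_tendstoD(2)) auto
    then show ?thesis by eventually_elim auto
  qed simp
  then have "eventually (\<lambda>N. \<forall>j\<in>J. \<beta> j < 0 \<longrightarrow> lam j * real N powr \<beta> j \<le> 1) sequentially"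
    using \<open>finite J\<close> by (intro eventually_ball_finite) auto
  then have "eventually (\<lambda>N. \<forall>k. 0 \<le> site_fug g J x \<beta> lam c N k \<and> site_fug g J x \<beta> lam c N k \<le> \<phi>')
      sequentially"
  proof eventually_elim
    case (elim N)
    show ?case
    proof
      fix k
      show "0 \<le> site_fug g J x \<beta> lam c N k \<and> site_fug g J x \<beta> lam c N k \<le> \<phi>'"
      proof (cases "k \<in> (\<lambda>j. ksite (x j) N) ` J")
        case True
        then obtain j where j: "j \<in> J" and fug: "site_fug g J x \<beta> lam c N k = lam j * real N powr \<beta> j * ?\<Phi>"
          by (rule site_fug_at_defect)
        have "\<beta> j \<le> 0" "0 < lam j" using assms j by auto
        moreover have "lam j * real N powr \<beta> j * ?\<Phi> \<le> 1 * ?\<Phi>" if "\<beta> j < 0"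
          using elim j that \<Phi> by (intro mult_right_mono) auto
        ultimately show ?thesis
          unfolding fug using \<phi>' j \<Phi> by (cases "\<beta> j = 0") auto
      qed (use \<Phi> \<phi>' in \<open>simp add: site_fug_off_defects\<close>)
    qed
  qed
  moreover have "0 \<le> \<phi>'" using \<Phi> \<phi>' by linarith
  ultimately show ?thesis using that \<phi>' by blast
qed

lemma Riemann_sum_Rmean_site_fug_tendsto:
  assumes "finite J" "0 \<le> c" "\<phi>' < 1" "continuous_on {0..1} G"
    and bounded: "eventually (\<lambda>N. \<forall>k<N. 0 \<le> site_fug g J x \<beta> lam c N k \<and> site_fug g J x \<beta> lam c N k \<le> \<phi>')
      sequentially"
  shows "(\<lambda>N. \<Sum>k<N. G (real k / real N) / real N * Rmean g (site_fug g J x \<beta> lam c N k))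
    \<longlonglongrightarrow> c * integral {0..1} G"
proof -
  have "eventually (\<lambda>N. \<forall>k<N. \<bar>Rmean g (site_fug g J x \<beta> lam c N k)\<bar>
      \<le> (\<Sum>n. real n * (\<phi>' ^ n / gfact g n))) sequentially"
    using bounded by eventually_elim (use \<open>\<phi>' < 1\<close> in \<open>blast intro: abs_Rmean_le_moment\<close>)
  then show ?thesis
    using \<open>finite J\<close> \<open>continuous_on {0..1} G\<close>
    by (intro Riemann_sum_perturbed_tendsto[where D = "\<lambda>N. (\<lambda>j. ksite (x j) N) ` J" and m = "card J"])
      (auto simp: site_fug_off_defects Rmean_Phi[OF \<open>0 \<le> c\<close>] card_image_le)
qed

end

theorem mainTheorem6:
  fixes g :: "nat \<Rightarrow> real" and gstar :: real
    and J :: "'j set" and x \<beta> lam :: "'j \<Rightarrow> real"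
    and c \<delta> :: real and G :: "real \<Rightarrow> real"
  assumes g_nonneg: "\<And>n. g n \<ge> 0"
    and g_zero: "\<And>n. g n = 0 \<longleftrightarrow> n = 0"
    and g_lip: "\<And>n. \<bar>g (Suc n) - g n\<bar> \<le> gstar"
    and g_mono: "mono g"
    and g_bdd: "g \<longlonglongrightarrow> 1"
    and J_fin: "finite J"
    and x_range: "\<And>j. j \<in> J \<Longrightarrow> 0 \<le> x j \<and> x j < 1"
    and x_inj: "inj_on x J"
    and lam_pos: "\<And>j. j \<in> J \<Longrightarrow> lam j > 0"
    and Js_empty: "{j \<in> J. \<beta> j > 0} = {}"
    and c_nonneg: "0 \<le> c"
    and c_sub: "Jcrit J \<beta> lam \<noteq> {} \<Longrightarrow> c < Rmean g (1 / lambda_max J \<beta> lam)"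
    and G_cont: "continuous_on UNIV G"
    and G_per: "\<And>y. G (y + 1) = G y"
    and \<delta>_pos: "\<delta> > 0"
  shows "(\<lambda>N. measure (RN g J x \<beta> lam c N)
            {\<xi> \<in> space (RN g J x \<beta> lam c N).
               \<bar>pairing_emp G N \<xi> - integral {0..1} (\<lambda>y. G y * c)\<bar> > \<delta>})
         \<longlonglongrightarrow> 0"
proof -
  interpret bounded_rate g
    using g_nonneg g_zero g_mono g_bdd by (rule bounded_rate_of_mono)
  let ?fug = "site_fug g J x \<beta> lam c"
  obtain \<phi>' where \<phi>': "0 \<le> \<phi>'" "\<phi>' < 1"
    and fug_all: "eventually (\<lambda>N. \<forall>k. 0 \<le> ?fug N k \<and> ?fug N k \<le> \<phi>') sequentially"
    using site_fug_eventually_bounded[OF J_fin lam_pos Js_empty c_nonneg c_sub] by blast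
  from fug_all have fug: "eventually (\<lambda>N. \<forall>k<N. 0 \<le> ?fug N k \<and> ?fug N k \<le> \<phi>') sequentially"
    by (rule eventually_mono) blast
  have G: "continuous_on {0..1} G" using G_cont by (rule continuous_on_subset) simp
  obtain B where B: "\<And>y. y \<in> {0..1} \<Longrightarrow> \<bar>G y\<bar> \<le> B"
    using compact_imp_bounded[OF compact_continuous_image[OF G]] unfolding bounded_iff by fastforce
  have weights: "\<bar>G (real k / real N) / real N\<bar> \<le> B / real N" if "k < N" for k N
    using B[of "real k / real N"] that by (simp add: divide_right_mono)
  have "(\<lambda>N. \<Sum>k<N. G (real k / real N) / real N * Rmean g (?fug N k))
      \<longlonglongrightarrow> integral {0..1} (\<lambda>y. G y * c)"
    using Riemann_sum_Rmean_site_fug_tendsto[OF J_fin c_nonneg \<phi>'(2) G fug] by (simp add: mult.commute)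
  from Pdist_product_weak_law[OF fug \<phi>' weights this \<delta>_pos]
  have "(\<lambda>N. measure (RN g J x \<beta> lam c N) {\<xi> \<in> space (RN g J x \<beta> lam c N).
      \<delta> < \<bar>(\<Sum>k<N. G (real k / real N) / real N * real (\<xi> k)) - integral {0..1} (\<lambda>y. G y * c)\<bar>})
      \<longlonglongrightarrow> 0"
    unfolding RN_eq_PiM_Pdist_measure .
  moreover have "pairing_emp G N \<xi> = (\<Sum>k<N. G (real k / real N) / real N * real (\<xi> k))" for N \<xi>
    unfolding pairing_emp_def sum_distrib_left by (intro sum.cong) auto
  ultimately show ?thesis by simp
qed

end
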